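(* Let $G>0$, $T>0$, and let $F\colon\mathbb R\to\mathbb R$ be continuous and $T$-periodic. Then the equation \[ \ddot x=\left(G\sqrt{1-x^2}-\frac{\dot x^2}{1-x^2}\right)x-(1-x^2)F(t) \] has a $T$-periodic solution $x\colon\mathbb R\to(-1,1)$. *)

theory Defs
  imports "HOL-Analysis.Analysis"
begin

end

theory Submission
  imports Defs "HOL-Library.Periodic_Fun"
begin

(* Writing x = sin \<theta> with |\<theta>| < pi/2 turns the equation into the forced pendulum equation
   \<theta>'' = G sin \<theta> - F(t) cos \<theta>.  Choose m with m^2 \<ge> G + sup |F|; then y \<mapsto> m^2 y - G sin y + F(t) cos y
   is increasing, and the T-periodic solutions are the fixed points of the monotone operator
   \<theta> \<mapsto> K (m^2 \<theta> - G sin \<theta> + F cos \<theta>), where K, the inverse of -d^2/dt^2 + m^2 on T-periodic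
   functions, has a positive kernel.  This operator maps the set of T-periodic, (m pi/2)-Lipschitz
   functions with values in [-pi/2, pi/2] into itself; that set contains the constant -pi/2 and is
   closed under pointwise suprema, so the supremum of the subsolutions is a fixed point.  As
   |K h| \<le> sup |h| / m^2, the fixed point satisfies |\<theta>| \<le> pi/2 - G/m^2 < pi/2, so x = sin \<theta> takes
   values in (-1, 1). *)

section \<open>The periodic Green operator of -d^2/dt^2 + m^2\<close>

lemma integral_window_has_real_derivative:
  fixes g :: "real \<Rightarrow> real"
  assumes g: "continuous_on UNIV g" and "a \<le> b"
  shows "((\<lambda>x. integral {x + a..x + b} g) has_real_derivative g (t + b) - g (t + a)) (at t)"
proof -
  define c where "c = t + a - 1"
  have upper: "((\<lambda>x. integral {c..x} g) has_real_derivative g s) (at s)" if "c < s" for s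
  proof -
    have "((\<lambda>x. integral {c..x} g) has_real_derivative g s) (at s within {c..s + 1})"
      by (rule integral_has_real_derivative) (use that in \<open>auto intro: continuous_on_subset[OF g]\<close>)
    moreover have "at s within {c..s + 1} = at s"
      using that by (intro at_within_Icc_at) auto
    ultimately show ?thesis by simp
  qed
  have "((\<lambda>x. integral {c..x + b} g - integral {c..x + a} g) has_real_derivative g (t + b) - g (t + a)) (at t)"
    using upper[of "t + b"] upper[of "t + a"] \<open>a \<le> b\<close>
    by (intro DERIV_diff) (auto simp: c_def DERIV_shift)
  then show ?thesis
  proof (rule has_field_derivative_transform_within_open[where S = "{c - a<..}"])
    fix x assume "x \<in> {c - a<..}"
    then have "integral {c..x + a} g + integral {x + a..x + b} g = integral {c..x + b} g"
      using \<open>a \<le> b\<close>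
      by (intro Henstock_Kurzweil_Integration.integral_combine integrable_continuous_interval
          continuous_on_subset[OF g]) auto
    then show "integral {c..x + b} g - integral {c..x + a} g = integral {x + a..x + b} g"
      by simp
  qed (auto simp: c_def)
qed

text \<open>For continuous T-periodic h, periodic_green m T h is the T-periodic solution of
  -u'' + m^2 u = h.  It integrates h against the kernel exp (- m |t - s|) / (2 m) summed over all
  translates of s by multiples of T, which produces the factor 1 / (1 - exp (- m T)); the summed
  kernel is positive, so the operator is monotone in h.  The parts s < t and s > t of the
  integral are green_left and green_right.\<close>

definition green_left :: "real \<Rightarrow> real \<Rightarrow> (real \<Rightarrow> real) \<Rightarrow> real \<Rightarrow> real" where
  "green_left m T h t = integral {t - T..t} (\<lambda>s. exp (m * s) * h s) / (1 - exp (- m * T))"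

definition green_right :: "real \<Rightarrow> real \<Rightarrow> (real \<Rightarrow> real) \<Rightarrow> real \<Rightarrow> real" where
  "green_right m T h t = integral {t..t + T} (\<lambda>s. exp (- m * s) * h s) / (1 - exp (- m * T))"

definition periodic_green :: "real \<Rightarrow> real \<Rightarrow> (real \<Rightarrow> real) \<Rightarrow> real \<Rightarrow> real" where
  "periodic_green m T h t =
     (exp (- m * t) * green_left m T h t + exp (m * t) * green_right m T h t) / (2 * m)"

definition periodic_green_deriv :: "real \<Rightarrow> real \<Rightarrow> (real \<Rightarrow> real) \<Rightarrow> real \<Rightarrow> real" where
  "periodic_green_deriv m T h t =
     (exp (m * t) * green_right m T h t - exp (- m * t) * green_left m T h t) / 2"

lemma green_left_add_period:
  assumes h_periodic: "\<And>t. h (t + T) = h t"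
  shows "green_left m T h (t + T) = exp (m * T) * green_left m T h t"
proof -
  have "integral {t + T - T..t + T} (\<lambda>s. exp (m * s) * h s)
      = integral {t - T..t} (\<lambda>s. exp (m * T) * (exp (m * s) * h s))"
    using integral_shift_Icc_real[of "t - T" t "\<lambda>s. exp (m * s) * h s" T] h_periodic
    by (simp add: o_def algebra_simps exp_add)
  then show ?thesis by (simp add: green_left_def)
qed

lemma green_right_add_period:
  assumes h_periodic: "\<And>t. h (t + T) = h t"
  shows "green_right m T h (t + T) = exp (- m * T) * green_right m T h t"
proof -
  have "integral {t + T..t + T + T} (\<lambda>s. exp (- m * s) * h s)
      = integral {t..t + T} (\<lambda>s. exp (- m * T) * (exp (- m * s) * h s))"
    using integral_shift_Icc_real[of t "t + T" "\<lambda>s. exp (- m * s) * h s" T] h_periodic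
    by (simp add: o_def algebra_simps flip: exp_add)
  then show ?thesis by (simp add: green_right_def)
qed

lemma periodic_green_add_period:
  assumes "\<And>t. h (t + T) = h t"
  shows "periodic_green m T h (t + T) = periodic_green m T h t"
  unfolding periodic_green_def green_left_add_period[of h T, OF assms]
    green_right_add_period[of h T, OF assms]
  by (simp add: algebra_simps flip: exp_add)

context
  fixes m T :: real
  assumes m: "m > 0" and T: "T > 0"
begin

lemma green_left_mono:
  assumes "continuous_on UNIV h\<^sub>1" "continuous_on UNIV h\<^sub>2" "\<And>s. h\<^sub>1 s \<le> h\<^sub>2 s"
  shows "green_left m T h\<^sub>1 t \<le> green_left m T h\<^sub>2 t"
  unfolding green_left_def using m T assms
  by (intro divide_right_mono integral_le integrable_continuous_interval continuous_intros)
    (auto intro: continuous_on_subset)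

lemma green_right_mono:
  assumes "continuous_on UNIV h\<^sub>1" "continuous_on UNIV h\<^sub>2" "\<And>s. h\<^sub>1 s \<le> h\<^sub>2 s"
  shows "green_right m T h\<^sub>1 t \<le> green_right m T h\<^sub>2 t"
  unfolding green_right_def using m T assms
  by (intro divide_right_mono integral_le integrable_continuous_interval continuous_intros)
    (auto intro: continuous_on_subset)

lemma periodic_green_mono:
  assumes "continuous_on UNIV h\<^sub>1" "continuous_on UNIV h\<^sub>2" "\<And>s. h\<^sub>1 s \<le> h\<^sub>2 s"
  shows "periodic_green m T h\<^sub>1 t \<le> periodic_green m T h\<^sub>2 t"
  unfolding periodic_green_def using m green_left_mono[OF assms] green_right_mono[OF assms]
  by (intro divide_right_mono add_mono mult_left_mono) auto

lemma green_left_const: "green_left m T (\<lambda>_. k) t = k * exp (m * t) / m"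
proof -
  have eq: "k * exp (m * t) / m - k * exp (m * (t - T)) / m = k * exp (m * t) / m * (1 - exp (- m * T))"
    by (simp add: algebra_simps diff_divide_distrib flip: exp_add)
  have "((\<lambda>s. exp (m * s) * k) has_integral k * exp (m * t) / m - k * exp (m * (t - T)) / m) {t - T..t}"
    using m T by (intro fundamental_theorem_of_calculus)
      (auto intro!: derivative_eq_intros simp flip: has_real_derivative_iff_has_vector_derivative)
  then have "integral {t - T..t} (\<lambda>s. exp (m * s) * k) = k * exp (m * t) / m * (1 - exp (- m * T))"
    unfolding eq by (rule integral_unique)
  then show ?thesis
    using m T by (simp add: green_left_def)
qed

lemma green_right_const: "green_right m T (\<lambda>_. k) t = k * exp (- m * t) / m"
proof -
  have eq: "- k * exp (- m * (t + T)) / m - - k * exp (- m * t) / m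
      = k * exp (- m * t) / m * (1 - exp (- m * T))"
    by (simp add: algebra_simps diff_divide_distrib flip: exp_add)
  have "((\<lambda>s. exp (- m * s) * k) has_integral
      - k * exp (- m * (t + T)) / m - - k * exp (- m * t) / m) {t..t + T}"
    using m T by (intro fundamental_theorem_of_calculus)
      (auto intro!: derivative_eq_intros simp flip: has_real_derivative_iff_has_vector_derivative)
  then have "integral {t..t + T} (\<lambda>s. exp (- m * s) * k) = k * exp (- m * t) / m * (1 - exp (- m * T))"
    unfolding eq by (rule integral_unique)
  then show ?thesis
    using m T by (simp add: green_right_def)
qed

lemma green_left_abs_le:
  assumes h: "continuous_on UNIV h" and "\<And>s. \<bar>h s\<bar> \<le> H"
  shows "\<bar>green_left m T h t\<bar> \<le> H * exp (m * t) / m"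
proof -
  have lo: "- H \<le> h s" and hi: "h s \<le> H" for s
    using assms(2)[of s] by auto
  show ?thesis
    using green_left_mono[OF continuous_on_const h lo, of t] green_left_mono[OF h continuous_on_const hi, of t]
    by (simp add: green_left_const abs_le_iff)
qed

lemma green_right_abs_le:
  assumes h: "continuous_on UNIV h" and "\<And>s. \<bar>h s\<bar> \<le> H"
  shows "\<bar>green_right m T h t\<bar> \<le> H * exp (- m * t) / m"
proof -
  have lo: "- H \<le> h s" and hi: "h s \<le> H" for s
    using assms(2)[of s] by auto
  show ?thesis
    using green_right_mono[OF continuous_on_const h lo, of t] green_right_mono[OF h continuous_on_const hi, of t]
    by (simp add: green_right_const abs_le_iff)
qed

lemma periodic_green_abs_le:
  assumes "continuous_on UNIV h" "\<And>s. \<bar>h s\<bar> \<le> H"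
  shows "\<bar>periodic_green m T h t\<bar> \<le> H / m\<^sup>2"
proof -
  have "\<bar>periodic_green m T h t\<bar> = \<bar>exp (- m * t) * green_left m T h t + exp (m * t) * green_right m T h t\<bar> / (2 * m)"
    using m by (simp add: periodic_green_def)
  also have "\<dots> \<le> (exp (- m * t) * \<bar>green_left m T h t\<bar> + exp (m * t) * \<bar>green_right m T h t\<bar>) / (2 * m)"
    using m abs_triangle_ineq[of "exp (- m * t) * green_left m T h t" "exp (m * t) * green_right m T h t"]
    by (intro divide_right_mono) (auto simp: abs_mult)
  also have "\<dots> \<le> (exp (- m * t) * (H * exp (m * t) / m) + exp (m * t) * (H * exp (- m * t) / m)) / (2 * m)"
    using m green_left_abs_le[OF assms] green_right_abs_le[OF assms]
    by (intro divide_right_mono add_mono mult_left_mono) auto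
  also have "\<dots> = H / m\<^sup>2"
    using m by (simp add: exp_minus field_simps power2_eq_square)
  finally show ?thesis .
qed

lemma periodic_green_deriv_abs_le:
  assumes "continuous_on UNIV h" "\<And>s. \<bar>h s\<bar> \<le> H"
  shows "\<bar>periodic_green_deriv m T h t\<bar> \<le> H / m"
proof -
  have "\<bar>periodic_green_deriv m T h t\<bar> = \<bar>exp (m * t) * green_right m T h t - exp (- m * t) * green_left m T h t\<bar> / 2"
    by (simp add: periodic_green_deriv_def)
  also have "\<dots> \<le> (exp (m * t) * \<bar>green_right m T h t\<bar> + exp (- m * t) * \<bar>green_left m T h t\<bar>) / 2"
    using abs_triangle_ineq4[of "exp (m * t) * green_right m T h t" "exp (- m * t) * green_left m T h t"]
    by (intro divide_right_mono) (auto simp: abs_mult)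
  also have "\<dots> \<le> (exp (m * t) * (H * exp (- m * t) / m) + exp (- m * t) * (H * exp (m * t) / m)) / 2"
    using green_left_abs_le[OF assms] green_right_abs_le[OF assms]
    by (intro divide_right_mono add_mono mult_left_mono) auto
  also have "\<dots> = H / m"
    using m by (simp add: exp_minus field_simps)
  finally show ?thesis .
qed

context
  fixes h :: "real \<Rightarrow> real"
  assumes h: "continuous_on UNIV h" and h_periodic: "\<And>t. h (t + T) = h t"
begin

lemma green_left_has_real_derivative:
  "(green_left m T h has_real_derivative exp (m * t) * h t) (at t)"
proof -
  let ?g = "\<lambda>s. exp (m * s) * h s"
  have "((\<lambda>x. integral {x + - T..x + 0} ?g) has_real_derivative ?g (t + 0) - ?g (t + - T)) (at t)"
    using T by (intro integral_window_has_real_derivative continuous_intros h) auto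
  moreover have "?g (t + 0) - ?g (t + - T) = exp (m * t) * h t * (1 - exp (- m * T))"
    using h_periodic[of "t - T"] by (simp add: algebra_simps flip: exp_add)
  ultimately have "((\<lambda>x. integral {x - T..x} ?g / (1 - exp (- m * T))) has_real_derivative
      exp (m * t) * h t * (1 - exp (- m * T)) / (1 - exp (- m * T))) (at t)"
    by (intro DERIV_cdivide) simp
  then show ?thesis
    using m T by (simp add: green_left_def[abs_def])
qed

lemma green_right_has_real_derivative:
  "(green_right m T h has_real_derivative - exp (- m * t) * h t) (at t)"
proof -
  let ?g = "\<lambda>s. exp (- m * s) * h s"
  have "((\<lambda>x. integral {x + 0..x + T} ?g) has_real_derivative ?g (t + T) - ?g (t + 0)) (at t)"
    using T by (intro integral_window_has_real_derivative continuous_intros h) auto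
  moreover have "?g (t + T) - ?g (t + 0) = - exp (- m * t) * h t * (1 - exp (- m * T))"
    using h_periodic[of t] by (simp add: algebra_simps flip: exp_add)
  ultimately have "((\<lambda>x. integral {x..x + T} ?g / (1 - exp (- m * T))) has_real_derivative
      - exp (- m * t) * h t * (1 - exp (- m * T)) / (1 - exp (- m * T))) (at t)"
    by (intro DERIV_cdivide) simp
  then show ?thesis
    using m T by (simp add: green_right_def[abs_def])
qed

lemma periodic_green_has_real_derivative:
  "(periodic_green m T h has_real_derivative periodic_green_deriv m T h t) (at t)"
  unfolding periodic_green_def[abs_def]
  by (rule derivative_eq_intros green_left_has_real_derivative green_right_has_real_derivative refl)+
    (use m in \<open>simp_all add: periodic_green_deriv_def exp_minus field_simps\<close>)

lemma periodic_green_deriv_has_real_derivative: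
  "(periodic_green_deriv m T h has_real_derivative m\<^sup>2 * periodic_green m T h t - h t) (at t)"
  unfolding periodic_green_deriv_def[abs_def]
  by (rule derivative_eq_intros green_left_has_real_derivative green_right_has_real_derivative refl)+
    (use m in \<open>simp_all add: periodic_green_def exp_minus field_simps power2_eq_square\<close>)

end

end

section \<open>Fixed points of monotone operators on sets of functions\<close>

text \<open>As in the Knaster-Tarski theorem, the pointwise supremum of the subsolutions
  \<theta> \<le> \<Phi> \<theta> is a fixed point; S only needs to be closed under such suprema.\<close>

lemma monotone_fixpoint_pointwise_SUP:
  fixes \<Phi> :: "('a \<Rightarrow> 'b::conditionally_complete_lattice) \<Rightarrow> 'a \<Rightarrow> 'b"
  assumes "\<alpha> \<in> S" "\<alpha> \<le> \<Phi> \<alpha>"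
    and maps: "\<And>\<theta>. \<theta> \<in> S \<Longrightarrow> \<Phi> \<theta> \<in> S"
    and mono: "\<And>\<theta>\<^sub>1 \<theta>\<^sub>2. \<theta>\<^sub>1 \<in> S \<Longrightarrow> \<theta>\<^sub>2 \<in> S \<Longrightarrow> \<theta>\<^sub>1 \<le> \<theta>\<^sub>2 \<Longrightarrow> \<Phi> \<theta>\<^sub>1 \<le> \<Phi> \<theta>\<^sub>2"
    and bdd: "\<And>t. bdd_above ((\<lambda>\<theta>. \<theta> t) ` S)"
    and SUP_closed: "\<And>P. P \<subseteq> S \<Longrightarrow> P \<noteq> {} \<Longrightarrow> (\<lambda>t. SUP \<theta>\<in>P. \<theta> t) \<in> S"
  shows "\<exists>\<theta>\<in>S. \<Phi> \<theta> = \<theta>"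
proof -
  define P where "P = {\<theta>\<in>S. \<theta> \<le> \<Phi> \<theta>}"
  define \<sigma> where "\<sigma> = (\<lambda>t. SUP \<theta>\<in>P. \<theta> t)"
  have "P \<subseteq> S" "P \<noteq> {}"
    using assms(1,2) by (auto simp: P_def)
  then have "\<sigma> \<in> S"
    unfolding \<sigma>_def by (rule SUP_closed)
  have upper: "\<theta> \<le> \<sigma>" if "\<theta> \<in> P" for \<theta>
    unfolding le_fun_def \<sigma>_def
    using that bdd_above_mono[OF bdd image_mono[OF \<open>P \<subseteq> S\<close>]] by (auto intro!: cSUP_upper)
  have "\<sigma> \<le> \<Phi> \<sigma>"
    unfolding le_fun_def
  proof
    fix t
    have "\<theta> t \<le> \<Phi> \<sigma> t" if "\<theta> \<in> P" for \<theta>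
    proof -
      have "\<theta> \<le> \<Phi> \<theta>" "\<Phi> \<theta> \<le> \<Phi> \<sigma>"
        using that \<open>\<sigma> \<in> S\<close> upper[OF that] by (auto simp: P_def intro: mono)
      then show ?thesis by (auto simp: le_fun_def intro: order_trans)
    qed
    then show "\<sigma> t \<le> \<Phi> \<sigma> t"
      unfolding \<sigma>_def using \<open>P \<noteq> {}\<close> by (blast intro: cSUP_least)
  qed
  then have "\<Phi> \<sigma> \<in> P"
    using \<open>\<sigma> \<in> S\<close> by (auto simp: P_def intro: maps mono)
  then have "\<Phi> \<sigma> \<le> \<sigma>"
    by (rule upper)
  with \<open>\<sigma> \<le> \<Phi> \<sigma>\<close> \<open>\<sigma> \<in> S\<close> show ?thesis
    by (blast intro: antisym)
qed

lemma lipschitz_on_SUP: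
  fixes f :: "'i \<Rightarrow> 'a::metric_space \<Rightarrow> real"
  assumes "I \<noteq> {}" and lip: "\<And>i. i \<in> I \<Longrightarrow> C-lipschitz_on U (f i)"
    and bdd: "\<And>x. x \<in> U \<Longrightarrow> bdd_above ((\<lambda>i. f i x) ` I)"
  shows "C-lipschitz_on U (\<lambda>x. SUP i\<in>I. f i x)"
proof (rule lipschitz_onI)
  have SUP_le: "(SUP i\<in>I. f i x) \<le> (SUP i\<in>I. f i y) + C * dist x y" if "x \<in> U" "y \<in> U" for x y
  proof (rule cSUP_least[OF \<open>I \<noteq> {}\<close>])
    fix i assume "i \<in> I"
    then have "f i x \<le> f i y + C * dist x y"
      using lipschitz_onD[OF lip[OF \<open>i \<in> I\<close>] that] by (simp add: dist_real_def abs_le_iff)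
    also have "f i y \<le> (SUP i\<in>I. f i y)"
      using \<open>i \<in> I\<close> bdd[OF \<open>y \<in> U\<close>] by (rule cSUP_upper)
    finally show "f i x \<le> (SUP i\<in>I. f i y) + C * dist x y"
      by simp
  qed
  show "dist (SUP i\<in>I. f i x) (SUP i\<in>I. f i y) \<le> C * dist x y" if "x \<in> U" "y \<in> U" for x y
    using SUP_le[OF that] SUP_le[OF that(2,1)] by (simp add: dist_real_def dist_commute abs_le_iff)
  show "0 \<le> C"
    using \<open>I \<noteq> {}\<close> lip lipschitz_on_nonneg by blast
qed

definition periodic_lipschitz_band :: "real \<Rightarrow> real \<Rightarrow> real \<Rightarrow> (real \<Rightarrow> real) set" where
  "periodic_lipschitz_band T C b =
     {\<theta>. C-lipschitz_on UNIV \<theta> \<and> (\<forall>t. \<theta> (t + T) = \<theta> t) \<and> (\<forall>t. \<bar>\<theta> t\<bar> \<le> b)}"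

lemma SUP_in_periodic_lipschitz_band:
  assumes "P \<subseteq> periodic_lipschitz_band T C b" "P \<noteq> {}"
  shows "(\<lambda>t. SUP \<theta>\<in>P. \<theta> t) \<in> periodic_lipschitz_band T C b"
proof -
  have bdd: "bdd_above ((\<lambda>\<theta>. \<theta> t) ` P)" for t
    using assms(1) by (intro bdd_aboveI[of _ b]) (auto simp: periodic_lipschitz_band_def abs_le_iff)
  have "C-lipschitz_on UNIV (\<lambda>t. SUP \<theta>\<in>P. \<theta> t)"
    using assms bdd by (intro lipschitz_on_SUP) (auto simp: periodic_lipschitz_band_def)
  moreover have "(SUP \<theta>\<in>P. \<theta> (t + T)) = (SUP \<theta>\<in>P. \<theta> t)" for t
    using assms(1) by (intro SUP_cong) (auto simp: periodic_lipschitz_band_def)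
  moreover have "\<bar>SUP \<theta>\<in>P. \<theta> t\<bar> \<le> b" for t
  proof -
    obtain \<theta> where "\<theta> \<in> P" using assms(2) by blast
    then have "\<theta> \<in> periodic_lipschitz_band T C b"
      using assms(1) by blast
    then have "- \<theta> t \<le> b"
      by (simp add: periodic_lipschitz_band_def abs_le_D2)
    moreover have "\<theta> t \<le> (SUP \<theta>\<in>P. \<theta> t)"
      using \<open>\<theta> \<in> P\<close> bdd by (rule cSUP_upper)
    moreover have "(SUP \<theta>\<in>P. \<theta> t) \<le> b"
      using assms by (intro cSUP_least) (auto simp: periodic_lipschitz_band_def abs_le_iff)
    ultimately show ?thesis by linarith
  qed
  ultimately show ?thesis
    by (simp add: periodic_lipschitz_band_def)
qed

section \<open>The forced pendulum equation\<close>

lemma linear_minus_sin_cos_mono: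
  fixes G c M :: real
  assumes "\<bar>G\<bar> + \<bar>c\<bar> \<le> M" "y\<^sub>1 \<le> y\<^sub>2"
  shows "M * y\<^sub>1 - (G * sin y\<^sub>1 - c * cos y\<^sub>1) \<le> M * y\<^sub>2 - (G * sin y\<^sub>2 - c * cos y\<^sub>2)"
proof (rule DERIV_nonneg_imp_nondecreasing[OF \<open>y\<^sub>1 \<le> y\<^sub>2\<close>])
  fix y
  have "G * cos y \<le> \<bar>G\<bar>" "c * sin y \<le> \<bar>c\<bar>"
    by (rule order_trans[OF abs_ge_self], simp add: abs_mult mult_left_le)+
  moreover have "((\<lambda>y. M * y - (G * sin y - c * cos y)) has_real_derivative M - (G * cos y + c * sin y)) (at y)"
    by (auto intro!: derivative_eq_intros)
  ultimately show "\<exists>d. ((\<lambda>y. M * y - (G * sin y - c * cos y)) has_real_derivative d) (at y) \<and> 0 \<le> d"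
    using assms(1) by (intro exI conjI) auto
qed

definition shifted_pendulum_force :: "real \<Rightarrow> (real \<Rightarrow> real) \<Rightarrow> real \<Rightarrow> (real \<Rightarrow> real) \<Rightarrow> real \<Rightarrow> real" where
  "shifted_pendulum_force G F m \<theta> t = m\<^sup>2 * \<theta> t - (G * sin (\<theta> t) - F t * cos (\<theta> t))"

text \<open>The fixed points of pendulum_operator G T F m are the T-periodic solutions of
  \<theta>'' = G sin \<theta> - F cos \<theta>, written as -\<theta>'' + m^2 \<theta> = m^2 \<theta> - (G sin \<theta> - F cos \<theta>), whose right-hand
  side is increasing in \<theta> once m^2 \<ge> G + sup |F|.\<close>

definition pendulum_operator ::
    "real \<Rightarrow> real \<Rightarrow> (real \<Rightarrow> real) \<Rightarrow> real \<Rightarrow> (real \<Rightarrow> real) \<Rightarrow> real \<Rightarrow> real" where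
  "pendulum_operator G T F m \<theta> = periodic_green m T (shifted_pendulum_force G F m \<theta>)"

context
  fixes G T m :: real and F :: "real \<Rightarrow> real"
  assumes G: "G > 0" and T: "T > 0" and m: "m > 0"
    and F: "continuous_on UNIV F" and F_periodic: "\<And>t. F (t + T) = F t"
    and F_small: "\<And>t. G + \<bar>F t\<bar> \<le> m\<^sup>2"
begin

abbreviation pendulum_band :: "(real \<Rightarrow> real) set" where
  "pendulum_band \<equiv> periodic_lipschitz_band T (m * pi / 2) (pi / 2)"

lemma shifted_pendulum_force_continuous:
  assumes "\<theta> \<in> pendulum_band"
  shows "continuous_on UNIV (shifted_pendulum_force G F m \<theta>)"
proof -
  have "continuous_on UNIV \<theta>"
    using assms by (auto simp: periodic_lipschitz_band_def intro: lipschitz_on_continuous_on)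
  then show ?thesis
    unfolding shifted_pendulum_force_def[abs_def] by (intro continuous_intros F)
qed

lemma shifted_pendulum_force_periodic:
  "\<theta> \<in> pendulum_band \<Longrightarrow> shifted_pendulum_force G F m \<theta> (t + T) = shifted_pendulum_force G F m \<theta> t"
  by (simp add: shifted_pendulum_force_def periodic_lipschitz_band_def F_periodic)

lemma shifted_pendulum_force_mono:
  assumes "\<theta>\<^sub>1 \<le> \<theta>\<^sub>2"
  shows "shifted_pendulum_force G F m \<theta>\<^sub>1 t \<le> shifted_pendulum_force G F m \<theta>\<^sub>2 t"
  unfolding shifted_pendulum_force_def
  using G F_small[of t] assms by (intro linear_minus_sin_cos_mono) (auto simp: le_fun_def)

lemma shifted_pendulum_force_abs_le:
  assumes "\<theta> \<in> pendulum_band"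
  shows "\<bar>shifted_pendulum_force G F m \<theta> t\<bar> \<le> m\<^sup>2 * pi / 2 - G"
proof -
  have \<theta>_bound: "\<bar>\<theta> t\<bar> \<le> pi / 2"
    using assms by (simp add: periodic_lipschitz_band_def)
  have "\<bar>G\<bar> + \<bar>F t\<bar> \<le> m\<^sup>2"
    using G F_small[of t] by simp
  note mono = linear_minus_sin_cos_mono[OF this]
  have "m\<^sup>2 * - (pi / 2) - (G * sin (- (pi / 2)) - F t * cos (- (pi / 2)))
      \<le> shifted_pendulum_force G F m \<theta> t"
    unfolding shifted_pendulum_force_def using \<theta>_bound by (intro mono) simp
  moreover have "shifted_pendulum_force G F m \<theta> t
      \<le> m\<^sup>2 * (pi / 2) - (G * sin (pi / 2) - F t * cos (pi / 2))"
    unfolding shifted_pendulum_force_def using \<theta>_bound by (intro mono) simp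
  ultimately show ?thesis
    by (simp add: abs_le_iff)
qed

lemma pendulum_operator_abs_less:
  assumes "\<theta> \<in> pendulum_band"
  shows "\<bar>pendulum_operator G T F m \<theta> t\<bar> < pi / 2"
proof -
  have "\<bar>pendulum_operator G T F m \<theta> t\<bar> \<le> (m\<^sup>2 * pi / 2 - G) / m\<^sup>2"
    unfolding pendulum_operator_def using assms
    by (intro periodic_green_abs_le m T shifted_pendulum_force_continuous shifted_pendulum_force_abs_le)
  also have "\<dots> = pi / 2 - G / m\<^sup>2"
    using m by (simp add: field_simps)
  also have "\<dots> < pi / 2"
    using G m by simp
  finally show ?thesis .
qed

lemma pendulum_operator_in_band:
  assumes "\<theta> \<in> pendulum_band"
  shows "pendulum_operator G T F m \<theta> \<in> pendulum_band"
proof -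
  let ?h = "shifted_pendulum_force G F m \<theta>"
  note h = shifted_pendulum_force_continuous[OF assms]
    and h_periodic = shifted_pendulum_force_periodic[OF assms]
  have h_bound: "\<bar>?h t\<bar> \<le> m\<^sup>2 * pi / 2" for t
    using shifted_pendulum_force_abs_le[OF assms, of t] G by simp
  have "(m * pi / 2)-lipschitz_on UNIV (periodic_green m T ?h)"
  proof (rule lipschitz_onI)
    fix s t :: real
    have "\<bar>periodic_green_deriv m T ?h u\<bar> \<le> m * pi / 2" for u
      using periodic_green_deriv_abs_le[OF m T h h_bound, of u] m by (simp add: power2_eq_square)
    then show "dist (periodic_green m T ?h s) (periodic_green m T ?h t) \<le> m * pi / 2 * dist s t"
      using field_differentiable_bound[of UNIV "periodic_green m T ?h" "periodic_green_deriv m T ?h"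
          "m * pi / 2" s t] periodic_green_has_real_derivative[of m T ?h, OF m T h h_periodic]
      by (simp add: dist_real_def)
  qed (use m in simp)
  moreover have "\<bar>periodic_green m T ?h t\<bar> \<le> pi / 2" for t
    using pendulum_operator_abs_less[OF assms, of t] by (simp add: pendulum_operator_def)
  ultimately show ?thesis
    using periodic_green_add_period[of ?h T m] h_periodic
    by (simp add: pendulum_operator_def periodic_lipschitz_band_def)
qed

lemma pendulum_operator_mono:
  assumes "\<theta>\<^sub>1 \<in> pendulum_band" "\<theta>\<^sub>2 \<in> pendulum_band" "\<theta>\<^sub>1 \<le> \<theta>\<^sub>2"
  shows "pendulum_operator G T F m \<theta>\<^sub>1 \<le> pendulum_operator G T F m \<theta>\<^sub>2"
  unfolding pendulum_operator_def le_fun_def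
  using assms by (intro allI periodic_green_mono m T shifted_pendulum_force_continuous shifted_pendulum_force_mono)

lemma pendulum_operator_fixpoint: "\<exists>\<theta>\<in>pendulum_band. pendulum_operator G T F m \<theta> = \<theta>"
proof (rule monotone_fixpoint_pointwise_SUP)
  show bottom: "(\<lambda>_. - (pi / 2)) \<in> pendulum_band"
    using m by (simp add: periodic_lipschitz_band_def lipschitz_on_def)
  show "(\<lambda>_. - (pi / 2)) \<le> pendulum_operator G T F m (\<lambda>_. - (pi / 2))"
    unfolding le_fun_def
  proof
    fix t
    show "- (pi / 2) \<le> pendulum_operator G T F m (\<lambda>_. - (pi / 2)) t"
      using pendulum_operator_abs_less[OF bottom, of t] by (simp add: abs_less_iff)
  qed
  have "\<theta> t \<le> pi / 2" if "\<theta> \<in> pendulum_band" for \<theta> t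
  proof -
    have "\<bar>\<theta> t\<bar> \<le> pi / 2"
      using that by (simp add: periodic_lipschitz_band_def)
    then show ?thesis by (rule abs_le_D1)
  qed
  then show "bdd_above ((\<lambda>\<theta>. \<theta> t) ` pendulum_band)" for t
    by (intro bdd_aboveI[of _ "pi / 2"]) blast
qed (auto intro: pendulum_operator_in_band pendulum_operator_mono SUP_in_periodic_lipschitz_band)

lemma pendulum_periodic_solution:
  obtains \<theta> \<theta>' where "\<And>t. (\<theta> has_real_derivative \<theta>' t) (at t)"
    and "\<And>t. (\<theta>' has_real_derivative G * sin (\<theta> t) - F t * cos (\<theta> t)) (at t)"
    and "\<And>t. \<bar>\<theta> t\<bar> < pi / 2" and "\<And>t. \<theta> (t + T) = \<theta> t"
proof -
  obtain \<theta> where \<theta>: "\<theta> \<in> pendulum_band" and fixed: "pendulum_operator G T F m \<theta> = \<theta>"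
    using pendulum_operator_fixpoint by blast
  let ?h = "shifted_pendulum_force G F m \<theta>"
  note h = shifted_pendulum_force_continuous[OF \<theta>]
    and h_periodic = shifted_pendulum_force_periodic[OF \<theta>]
  have green: "periodic_green m T ?h = \<theta>"
    using fixed by (simp add: pendulum_operator_def)
  show ?thesis
  proof
    show "(\<theta> has_real_derivative periodic_green_deriv m T ?h t) (at t)" for t
      using periodic_green_has_real_derivative[of m T ?h, OF m T h h_periodic] unfolding green .
    show "(periodic_green_deriv m T ?h has_real_derivative G * sin (\<theta> t) - F t * cos (\<theta> t)) (at t)" for t
      using periodic_green_deriv_has_real_derivative[of m T ?h t, OF m T h h_periodic]
      by (simp add: green shifted_pendulum_force_def)
    show "\<bar>\<theta> t\<bar> < pi / 2" for t
      using pendulum_operator_abs_less[OF \<theta>, of t] by (simp add: fixed)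
    show "\<theta> (t + T) = \<theta> t" for t
      using \<theta> by (simp add: periodic_lipschitz_band_def)
  qed
qed

end

lemma bounded_range_periodic:
  fixes f :: "real \<Rightarrow> 'a::real_normed_vector"
  assumes f: "continuous_on UNIV f" and "T > 0" and "\<And>t. f (t + T) = f t"
  shows "bounded (range f)"
proof -
  interpret periodic_fun_simple f T
    by standard (fact assms(3))
  have "range f \<subseteq> f ` {0..T}"
  proof safe
    fix t
    define n where "n = \<lfloor>t / T\<rfloor>"
    have "of_int n \<le> t / T" "t / T < of_int n + 1"
      unfolding n_def by linarith+
    then have "t - of_int n * T \<in> {0..T}"
      using \<open>T > 0\<close> by (simp add: field_simps)
    moreover have "f (t - of_int n * T) = f t"
      by (rule minus_of_int)
    ultimately show "f t \<in> f ` {0..T}"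
      by (metis image_eqI)
  qed
  moreover have "compact (f ` {0..T})"
    by (intro compact_continuous_image continuous_on_subset[OF f]) auto
  ultimately show ?thesis
    using bounded_subset compact_imp_bounded by blast
qed

lemma forced_pendulum_periodic_solution:
  fixes G T :: real and F :: "real \<Rightarrow> real"
  assumes "G > 0" "T > 0" "continuous_on UNIV F" "\<And>t. F (t + T) = F t"
  obtains \<theta> \<theta>' where "\<And>t. (\<theta> has_real_derivative \<theta>' t) (at t)"
    and "\<And>t. (\<theta>' has_real_derivative G * sin (\<theta> t) - F t * cos (\<theta> t)) (at t)"
    and "\<And>t. \<bar>\<theta> t\<bar> < pi / 2" and "\<And>t. \<theta> (t + T) = \<theta> t"
proof -
  obtain B where B: "\<And>t. \<bar>F t\<bar> \<le> B"
    using bounded_range_periodic[of F T, OF assms(3,2,4)] by (force simp: bounded_iff)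
  define m where "m = G + B + 1"
  have "m \<ge> 1"
    using assms(1) B[of 0] by (simp add: m_def)
  then have "m \<le> m\<^sup>2"
    by (simp add: power2_eq_square)
  then have "G + \<bar>F t\<bar> \<le> m\<^sup>2" for t
    using B[of t] unfolding m_def by linarith
  with \<open>m \<ge> 1\<close> show ?thesis
    using that pendulum_periodic_solution[of G T m F, OF assms(1,2) _ assms(3,4)] by auto
qed

lemma sin_in_Ioo_if_abs_less_pi_half:
  assumes "\<bar>y\<bar> < pi / 2"
  shows "sin y \<in> {-1<..<1}"
proof -
  have "cos y > 0"
    using assms by (intro cos_gt_zero_pi) (auto simp: abs_less_iff)
  then have "(sin y)\<^sup>2 < 1"
    by (simp add: sin_squared_eq)
  then show ?thesis
    unfolding abs_square_less_1 by (simp add: abs_less_iff)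
qed

lemma sin_pendulum_solution_second_derivative:
  fixes \<theta> \<theta>' F :: "real \<Rightarrow> real"
  assumes \<theta>: "\<And>t. (\<theta> has_real_derivative \<theta>' t) (at t)"
    and \<theta>': "\<And>t. (\<theta>' has_real_derivative G * sin (\<theta> t) - F t * cos (\<theta> t)) (at t)"
    and \<theta>_bound: "\<And>t. \<bar>\<theta> t\<bar> < pi / 2"
  shows "((\<lambda>t. cos (\<theta> t) * \<theta>' t) has_real_derivative
      (G * sqrt (1 - (sin (\<theta> t))\<^sup>2) - (cos (\<theta> t) * \<theta>' t)\<^sup>2 / (1 - (sin (\<theta> t))\<^sup>2)) * sin (\<theta> t)
      - (1 - (sin (\<theta> t))\<^sup>2) * F t) (at t)"
proof -
  have "cos (\<theta> t) > 0"
    using \<theta>_bound[of t] by (intro cos_gt_zero_pi) (auto simp: abs_less_iff)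
  moreover have cos_squared: "1 - (sin (\<theta> t))\<^sup>2 = (cos (\<theta> t))\<^sup>2"
    by (simp add: cos_squared_eq)
  moreover have "((\<lambda>t. cos (\<theta> t) * \<theta>' t) has_real_derivative
      - sin (\<theta> t) * \<theta>' t * \<theta>' t + cos (\<theta> t) * (G * sin (\<theta> t) - F t * cos (\<theta> t))) (at t)"
    by (auto intro!: derivative_eq_intros \<theta> \<theta>')
  ultimately show ?thesis
    unfolding cos_squared real_sqrt_abs by (simp add: field_simps power2_eq_square)
qed

theorem theorem3p3:
  fixes G T :: real and F :: "real \<Rightarrow> real"
  assumes "G > 0" and "T > 0"
    and "continuous_on UNIV F"
    and "\<And>t. F (t + T) = F t"
  shows "\<exists>x x' :: real \<Rightarrow> real.
           (\<forall>t. (x has_real_derivative x' t) (at t)) \<and>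
           (\<forall>t. x' differentiable (at t)) \<and>
           (\<forall>t. x t \<in> {-1<..<1}) \<and>
           (\<forall>t. x (t + T) = x t) \<and>
           (\<forall>t. deriv x' t =
                (G * sqrt (1 - (x t)\<^sup>2) - (x' t)\<^sup>2 / (1 - (x t)\<^sup>2)) * x t
                - (1 - (x t)\<^sup>2) * F t)"
proof -
  obtain \<theta> \<theta>' where \<theta>: "\<And>t. (\<theta> has_real_derivative \<theta>' t) (at t)"
    and \<theta>': "\<And>t. (\<theta>' has_real_derivative G * sin (\<theta> t) - F t * cos (\<theta> t)) (at t)"
    and \<theta>_bound: "\<And>t. \<bar>\<theta> t\<bar> < pi / 2" and \<theta>_periodic: "\<And>t. \<theta> (t + T) = \<theta> t"
    using forced_pendulum_periodic_solution[OF assms] by blast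
  note x'_deriv = sin_pendulum_solution_second_derivative[OF \<theta> \<theta>' \<theta>_bound]
  show ?thesis
  proof (intro exI conjI allI)
    show "((\<lambda>t. sin (\<theta> t)) has_real_derivative cos (\<theta> t) * \<theta>' t) (at t)" for t
      by (auto intro!: derivative_eq_intros \<theta>)
    show "(\<lambda>t. cos (\<theta> t) * \<theta>' t) differentiable (at t)" for t
      using x'_deriv real_differentiable_def by blast
    show "deriv (\<lambda>t. cos (\<theta> t) * \<theta>' t) t =
        (G * sqrt (1 - (sin (\<theta> t))\<^sup>2) - (cos (\<theta> t) * \<theta>' t)\<^sup>2 / (1 - (sin (\<theta> t))\<^sup>2)) * sin (\<theta> t)
        - (1 - (sin (\<theta> t))\<^sup>2) * F t" for t
      by (rule DERIV_imp_deriv[OF x'_deriv])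
  qed (use sin_in_Ioo_if_abs_less_pi_half[OF \<theta>_bound] \<theta>_periodic in auto)
qed

end
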